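(* Let $\alpha\ge0$ and $\mu\ge0$ be fixed. For every uniformly continuous bounded function $g$ on $[0,\infty)$ and every compact set $A\subset[0,\infty)$, $T_n(g;x)\to g(x)$ uniformly in $x\in A$ as $n\to\infty$.
   Context: For $\mu>-\tfrac12$ define $\gamma_\mu(2k)=\dfrac{2^{2k}k!\,\Gamma(k+\mu+1/2)}{\Gamma(\mu+1/2)}$ and $\gamma_\mu(2k+1)=\dfrac{2^{2k+1}k!\,\Gamma(k+\mu+3/2)}{\Gamma(\mu+1/2)}$, $k\ge0$; $e_\mu(x)=\sum_{k\ge0} x^k/\gamma_\mu(k)$; $\theta_k=0$ if $k$ is even and $\theta_k=1$ if $k$ is odd. Let $h_k^\mu(\xi,\alpha)=\gamma_\mu(k)\sum_{j=0}^{\lfloor k/2\rfloor}\dfrac{\alpha^j\xi^{k-2j}}{j!\,\gamma_\mu(k-2j)}$. For $\alpha\ge0,\mu\ge0$, $n\in\mathbb{N}$ and $x\in[0,\infty)$ define $$T_n(f;x)=\frac{1}{e^{\alpha x^2}e_\mu(nx)}\sum_{k=0}^\infty \frac{h_k^\mu(n,\alpha)}{\gamma_\mu(k)}x^k f\!\left(\frac{k+2\mu\theta_k}{n}\right).$$ *)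

theory Defs
  imports "HOL-Analysis.Analysis"
begin

definition gam :: "real \<Rightarrow> nat \<Rightarrow> real" where
  "gam \<mu> k = (if even k
     then 2 ^ k * fact (k div 2) * Gamma (real (k div 2) + \<mu> + 1/2) / Gamma (\<mu> + 1/2)
     else 2 ^ k * fact (k div 2) * Gamma (real (k div 2) + \<mu> + 3/2) / Gamma (\<mu> + 1/2))"

definition e_mu :: "real \<Rightarrow> real \<Rightarrow> real" where
  "e_mu \<mu> x = (\<Sum>k. x ^ k / gam \<mu> k)"

definition theta :: "nat \<Rightarrow> real" where
  "theta k = (if even k then 0 else 1)"

definition hpoly :: "real \<Rightarrow> nat \<Rightarrow> real \<Rightarrow> real \<Rightarrow> real" where
  "hpoly \<mu> k \<xi> \<alpha> = gam \<mu> k *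
     (\<Sum>j = 0..k div 2. \<alpha> ^ j * \<xi> ^ (k - 2 * j) / (fact j * gam \<mu> (k - 2 * j)))"

definition Top :: "real \<Rightarrow> real \<Rightarrow> nat \<Rightarrow> (real \<Rightarrow> real) \<Rightarrow> real \<Rightarrow> real" where
  "Top \<alpha> \<mu> n f x = (1 / (exp (\<alpha> * x\<^sup>2) * e_mu \<mu> (real n * x))) *
     (\<Sum>k. hpoly \<mu> k (real n) \<alpha> / gam \<mu> k * x ^ k * f ((real k + 2 * \<mu> * theta k) / real n))"

end

theory Submission
  imports Defs
begin

(*
  Expanding h_k^\<mu> shows that T_n(f;x) is a weighted average of f over the nodes
  (m + 2\<mu>\<theta>_m + 2j)/n, the weight of (j,m) being the product of the Poisson weight
  (\<alpha>x^2)^j/j! and the weight (nx)^m/\<gamma>_\<mu>(m) of the series e_\<mu>(nx), normalised by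
  exp(\<alpha>x^2) e_\<mu>(nx). A bounded uniformly continuous g satisfies
  |g t - g x| \<le> \<epsilon> + K (t - x)^2, so |T_n(g;x) - g x| is at most \<epsilon> plus K times the second
  moment of the nodes about x. Both weight families satisfy a recurrence
  b_(m+1) s_(m+1) = z b_m (for \<gamma>_\<mu> this is \<gamma>_\<mu>(m+1) = (m + 1 + 2\<mu>\<theta>_(m+1)) \<gamma>_\<mu>(m)), which gives
  the first moment z exactly and a central second moment of order z. Hence that second
  moment is O(1/n), uniformly for x in a bounded set.
*)

lemma recurrent_weights_first_moment:
  fixes b s :: "nat \<Rightarrow> real"
  assumes "b sums B" "s 0 = 0" "\<And>m. b (Suc m) * s (Suc m) = z * b m"
  shows "(\<lambda>m. b m * s m) sums (z * B)"
proof -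
  have "(\<lambda>m. b (Suc m) * s (Suc m)) sums (z * B)"
    unfolding assms(3) by (rule sums_mult[OF assms(1)])
  then show ?thesis using assms(2) by (subst (asm) sums_Suc_iff) simp
qed

lemma recurrent_weights_central_moment:
  fixes b s :: "nat \<Rightarrow> real"
  assumes b: "b sums B" and s0: "s 0 = 0" and rec: "\<And>m. b (Suc m) * s (Suc m) = z * b m"
    and summable: "summable (\<lambda>m. b m * (s (Suc m) - s m))"
  defines "C \<equiv> \<Sum>m. b m * (s (Suc m) - s m)"
  shows "(\<lambda>m. b m * (s m - z) ^ 2) sums (z * C)"
proof -
  have first: "(\<lambda>m. b m * s m) sums (z * B)"
    by (rule recurrent_weights_first_moment[OF b s0 rec])
  have "b (Suc m) * s (Suc m) ^ 2 = z * (b m * s m) + z * (b m * (s (Suc m) - s m))" for m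
  proof -
    have "b (Suc m) * s (Suc m) ^ 2 = (b (Suc m) * s (Suc m)) * s (Suc m)"
      by (simp add: power2_eq_square)
    then show ?thesis unfolding rec by (simp add: algebra_simps)
  qed
  moreover have "(\<lambda>m. z * (b m * s m) + z * (b m * (s (Suc m) - s m))) sums (z * (z * B) + z * C)"
    unfolding C_def by (intro sums_add sums_mult first summable_sums summable)
  ultimately have "(\<lambda>m. b (Suc m) * s (Suc m) ^ 2) sums (z * (z * B) + z * C)"
    by simp
  then have second: "(\<lambda>m. b m * s m ^ 2) sums (z * (z * B) + z * C)"
    using s0 by (subst (asm) sums_Suc_iff) simp
  have "(\<lambda>m. b m * s m ^ 2 - 2 * z * (b m * s m) + z ^ 2 * b m) sums
      (z * (z * B) + z * C - 2 * z * (z * B) + z ^ 2 * B)"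
    by (intro sums_add sums_diff sums_mult second first b)
  moreover have "(\<lambda>m. b m * s m ^ 2 - 2 * z * (b m * s m) + z ^ 2 * b m) = (\<lambda>m. b m * (s m - z) ^ 2)"
    by (simp add: power2_eq_square algebra_simps)
  moreover have "z * (z * B) + z * C - 2 * z * (z * B) + z ^ 2 * B = z * C"
    by (simp add: power2_eq_square algebra_simps)
  ultimately show ?thesis by (simp only:)
qed

lemma has_sum_product_nonneg:
  fixes a b :: "nat \<Rightarrow> real"
  assumes "a sums A" "b sums B" "\<And>j. a j \<ge> 0" "\<And>m. b m \<ge> 0"
  shows "((\<lambda>(j, m). a j * b m) has_sum (A * B)) UNIV"
proof -
  have a: "(a has_sum A) UNIV" by (rule sums_nonneg_imp_has_sum[OF assms(1,3)])
  have b: "(b has_sum B) UNIV" by (rule sums_nonneg_imp_has_sum[OF assms(2,4)])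
  have inner: "((\<lambda>m. (\<lambda>(j, m). a j * b m) (j, m)) has_sum (a j * B)) UNIV" for j
    using has_sum_cmult_right[OF b, of "a j"] by simp
  have outer: "((\<lambda>j. a j * B) has_sum (A * B)) UNIV"
    by (rule has_sum_cmult_left[OF a])
  have "(\<lambda>(j, m). a j * b m) summable_on Sigma UNIV (\<lambda>_. UNIV)"
    using outer assms(3,4)
    by (intro summable_on_SigmaI[OF inner]) (auto dest: has_sum_imp_summable)
  then show ?thesis using has_sum_SigmaI[OF inner outer] by simp
qed

lemma has_sum_imp_sums_grouped:
  fixes G :: "nat \<times> nat \<Rightarrow> real"
  assumes "(G has_sum S) UNIV"
  shows "(\<lambda>k. \<Sum>j\<le>k div 2. G (j, k - 2 * j)) sums S"
proof -
  have "(G has_sum S) UNIV =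
      ((\<lambda>(k, j). G (j, k - 2 * j)) has_sum S) (Sigma UNIV (\<lambda>k. {..k div 2}))"
    by (rule has_sum_reindex_bij_witness[where i = "\<lambda>(k, j). (j, k - 2 * j)"
          and j = "\<lambda>(j, m). (m + 2 * j, j)"]) auto
  then have "((\<lambda>(k, j). G (j, k - 2 * j)) has_sum S) (Sigma UNIV (\<lambda>k. {..k div 2}))"
    using assms by simp
  then have "((\<lambda>k. \<Sum>j\<le>k div 2. G (j, k - 2 * j)) has_sum S) UNIV"
    by (rule has_sum_Sigma') auto
  then show ?thesis by (rule has_sum_imp_sums)
qed

lemma has_sum_weighted_deviation:
  fixes w d f :: "'a \<Rightarrow> real"
  assumes w: "(w has_sum E) UNIV" and wd: "((\<lambda>p. w p * d p) has_sum V) UNIV"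
    and w_nonneg: "\<And>p. w p \<ge> 0" and dev: "\<And>p. \<bar>f p - c\<bar> \<le> \<epsilon> + K * d p"
  obtains S where "((\<lambda>p. w p * f p) has_sum S) UNIV" and "\<bar>S - c * E\<bar> \<le> \<epsilon> * E + K * V"
proof -
  have bound: "((\<lambda>p. \<epsilon> * w p + K * (w p * d p)) has_sum (\<epsilon> * E + K * V)) UNIV"
    by (intro has_sum_add has_sum_cmult_right w wd)
  have le: "norm (w p * (f p - c)) \<le> \<epsilon> * w p + K * (w p * d p)" for p
  proof -
    have "norm (w p * (f p - c)) = w p * \<bar>f p - c\<bar>"
      using w_nonneg[of p] by (simp add: abs_mult)
    also have "\<dots> \<le> w p * (\<epsilon> + K * d p)"
      by (rule mult_left_mono[OF dev w_nonneg])
    finally show ?thesis by (simp add: algebra_simps)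
  qed
  have abs_summable: "(\<lambda>p. norm (w p * (f p - c))) summable_on UNIV"
    by (rule Infinite_Sum.abs_summable_on_comparison_test'[OF has_sum_imp_summable[OF bound] le])
  define D where "D = (\<Sum>\<^sub>\<infinity>p. w p * (f p - c))"
  define N where "N = (\<Sum>\<^sub>\<infinity>p. norm (w p * (f p - c)))"
  have D: "((\<lambda>p. w p * (f p - c)) has_sum D) UNIV"
    unfolding D_def by (rule has_sum_infsum[OF abs_summable_summable[OF abs_summable]])
  have N: "((\<lambda>p. norm (w p * (f p - c))) has_sum N) UNIV"
    unfolding N_def by (rule has_sum_infsum[OF abs_summable])
  have "\<bar>D\<bar> \<le> N" using norm_has_sum_bound[OF N D] by simp
  also have "N \<le> \<epsilon> * E + K * V" by (rule has_sum_mono[OF N bound le])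
  finally have "\<bar>D\<bar> \<le> \<epsilon> * E + K * V" .
  moreover have "((\<lambda>p. w p * (f p - c) + c * w p) has_sum (D + c * E)) UNIV"
    by (intro has_sum_add D has_sum_cmult_right w)
  moreover have "(\<lambda>p. w p * (f p - c) + c * w p) = (\<lambda>p. w p * f p)"
    by (simp add: algebra_simps)
  ultimately show ?thesis using that by auto
qed

lemma uniformly_continuous_bounded_quadratic_modulus:
  fixes g :: "real \<Rightarrow> real"
  assumes "uniformly_continuous_on S g" and "bounded (g ` S)" and "\<epsilon> > 0"
  obtains K where "K \<ge> 0" and "\<And>t x. t \<in> S \<Longrightarrow> x \<in> S \<Longrightarrow> \<bar>g t - g x\<bar> \<le> \<epsilon> + K * (t - x)\<^sup>2"
proof -
  obtain M where "M > 0" and M: "\<And>t. t \<in> S \<Longrightarrow> \<bar>g t\<bar> \<le> M"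
    using assms(2) by (auto simp: bounded_pos)
  obtain \<delta> where "\<delta> > 0" and \<delta>: "\<And>t x. t \<in> S \<Longrightarrow> x \<in> S \<Longrightarrow> \<bar>t - x\<bar> < \<delta> \<Longrightarrow> \<bar>g t - g x\<bar> < \<epsilon>"
    using assms(1,3) unfolding uniformly_continuous_on_def dist_real_def by metis
  have "2 * M / \<delta>\<^sup>2 \<ge> 0" using \<open>M > 0\<close> by simp
  moreover have "\<bar>g t - g x\<bar> \<le> \<epsilon> + 2 * M / \<delta>\<^sup>2 * (t - x)\<^sup>2" if "t \<in> S" "x \<in> S" for t x
  proof (cases "\<bar>t - x\<bar> < \<delta>")
    case True
    have "0 \<le> 2 * M / \<delta>\<^sup>2 * (t - x)\<^sup>2" using \<open>M > 0\<close> by simp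
    then show ?thesis using \<delta>[OF that True] by linarith
  next
    case False
    then have "\<delta>\<^sup>2 \<le> (t - x)\<^sup>2"
      using \<open>\<delta> > 0\<close> by (simp flip: abs_le_square_iff)
    moreover have "0 \<le> 2 * M / \<delta>\<^sup>2" using \<open>M > 0\<close> by simp
    ultimately have "2 * M / \<delta>\<^sup>2 * \<delta>\<^sup>2 \<le> 2 * M / \<delta>\<^sup>2 * (t - x)\<^sup>2"
      by (rule mult_left_mono)
    then show ?thesis using \<open>\<delta> > 0\<close> \<open>\<epsilon> > 0\<close> M[OF that(1)] M[OF that(2)] by simp
  qed
  ultimately show ?thesis using that by blast
qed

lemma uniform_limitI_rate:
  assumes "\<And>\<epsilon>. \<epsilon> > 0 \<Longrightarrow> \<exists>C. \<forall>n>0. \<forall>x\<in>A. dist (f n x) (g x) \<le> \<epsilon> + C / real n"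
  shows "uniform_limit A f g sequentially"
  unfolding uniform_limit_iff
proof (intro allI impI)
  fix e :: real assume "e > 0"
  then obtain C where C: "\<And>n x. n > 0 \<Longrightarrow> x \<in> A \<Longrightarrow> dist (f n x) (g x) \<le> e / 2 + C / real n"
    using assms[of "e / 2"] by auto
  obtain N :: nat where N: "real N > 2 * \<bar>C\<bar> / e" using reals_Archimedean2 by blast
  show "\<forall>\<^sub>F n in sequentially. \<forall>x\<in>A. dist (f n x) (g x) < e"
  proof (rule eventually_sequentiallyI[of "Suc N"], intro ballI)
    fix n x assume n: "Suc N \<le> n" and x: "x \<in> A"
    have "C / real n \<le> \<bar>C\<bar> / real n" by (simp add: divide_right_mono)
    also have "\<bar>C\<bar> / real n < e / 2"
    proof -
      have "2 * \<bar>C\<bar> < e * real N"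
        using N \<open>e > 0\<close> by (simp add: field_simps)
      also have "\<dots> \<le> e * real n"
        using n \<open>e > 0\<close> by simp
      finally show ?thesis using n by (simp add: field_simps)
    qed
    finally show "dist (f n x) (g x) < e" using C[OF _ x, of n] n by linarith
  qed
qed

definition node :: "real \<Rightarrow> nat \<Rightarrow> real" where
  "node \<mu> k = real k + 2 * \<mu> * theta k"

lemma gam_pos: "\<mu> \<ge> 0 \<Longrightarrow> gam \<mu> k > 0"
  unfolding gam_def by simp

lemma gam_0: "\<mu> \<ge> 0 \<Longrightarrow> gam \<mu> 0 = 1"
  unfolding gam_def by (simp add: Gamma_real_pos_exp)

lemma gam_Suc:
  assumes "\<mu> \<ge> 0"
  shows "gam \<mu> (Suc m) = node \<mu> (Suc m) * gam \<mu> m"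
proof -
  define c where "c = 2 ^ m * fact (m div 2) / Gamma (\<mu> + 1/2)"
  show ?thesis
  proof (cases "even m")
    case True
    define a where "a = real (m div 2) + \<mu> + 1/2"
    have "Gamma (a + 1) = a * Gamma a"
      using assms by (intro Gamma_plus1) (auto simp: a_def dest: nonpos_Ints_nonpos)
    moreover have "gam \<mu> (Suc m) = 2 * c * Gamma (a + 1)" "gam \<mu> m = c * Gamma a"
      "node \<mu> (Suc m) = 2 * a"
      using True unfolding gam_def node_def theta_def a_def c_def
      by (auto simp: add_ac)
    ultimately show ?thesis by simp
  next
    case False
    have "gam \<mu> (Suc m) = 2 * real (Suc (m div 2)) * c * Gamma (real (m div 2) + \<mu> + 3/2)"
      using False unfolding gam_def c_def by (auto simp: add_ac elim!: oddE)
    moreover have "gam \<mu> m = c * Gamma (real (m div 2) + \<mu> + 3/2)"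
      using False unfolding gam_def c_def by simp
    moreover have "node \<mu> (Suc m) = 2 * real (Suc (m div 2))"
      using False unfolding node_def theta_def by (auto elim!: oddE)
    ultimately show ?thesis by simp
  qed
qed

lemma node_ge: "\<mu> \<ge> 0 \<Longrightarrow> node \<mu> k \<ge> real k"
  unfolding node_def theta_def by simp

lemma node_Suc_diff: "\<mu> \<ge> 0 \<Longrightarrow> \<bar>node \<mu> (Suc m) - node \<mu> m\<bar> \<le> 1 + 2 * \<mu>"
  unfolding node_def theta_def by auto

lemma gam_ge_fact:
  assumes "\<mu> \<ge> 0"
  shows "gam \<mu> m \<ge> fact m"
proof (induction m)
  case 0
  then show ?case using gam_0[OF assms] by simp
next
  case (Suc m)
  have "fact (Suc m) = real (Suc m) * fact m" by simp
  also have "\<dots> \<le> node \<mu> (Suc m) * gam \<mu> m"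
    using Suc node_ge[OF assms, of "Suc m"] by (intro mult_mono) auto
  finally show ?case using gam_Suc[OF assms] by simp
qed

lemma summable_e_mu_series:
  assumes "\<mu> \<ge> 0"
  shows "summable (\<lambda>m. z ^ m / gam \<mu> m)"
proof (rule summable_comparison_test')
  show "summable (\<lambda>m. \<bar>z\<bar> ^ m / fact m)"
    using summable_exp[of "\<bar>z\<bar>"] by (simp add: divide_inverse mult.commute)
  show "norm (z ^ m / gam \<mu> m) \<le> \<bar>z\<bar> ^ m / fact m" for m
    using gam_pos[OF assms, of m] gam_ge_fact[OF assms, of m]
    by (simp add: abs_mult power_abs frac_le)
qed

lemma sums_e_mu: "\<mu> \<ge> 0 \<Longrightarrow> (\<lambda>m. z ^ m / gam \<mu> m) sums e_mu \<mu> z"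
  unfolding e_mu_def by (rule summable_sums[OF summable_e_mu_series])

lemma e_mu_ge_1:
  assumes "\<mu> \<ge> 0" "z \<ge> 0"
  shows "e_mu \<mu> z \<ge> 1"
proof -
  have "(\<Sum>m<1. z ^ m / gam \<mu> m) \<le> e_mu \<mu> z"
    unfolding e_mu_def using summable_e_mu_series[OF assms(1)] gam_pos[OF assms(1)] assms(2)
    by (intro sum_le_suminf) (auto intro!: divide_nonneg_pos)
  then show ?thesis using gam_0[OF assms(1)] by simp
qed

lemma sums_exp_weights: "(\<lambda>j. y ^ j / fact j) sums exp (y::real)"
  using exp_converges[of y] by (simp add: divide_inverse mult.commute)

lemma sums_exp_weights_index_sq:
  "(\<lambda>j. y ^ j / fact j * real j ^ 2) sums (y * (y + 1) * exp (y::real))"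
proof -
  define a where "a j = y ^ j / fact j" for j
  have a: "a sums exp y" unfolding a_def by (rule sums_exp_weights)
  have rec: "a (Suc j) * real (Suc j) = y * a j" for j
    unfolding a_def by (simp add: divide_simps del: of_nat_Suc)
  have first: "(\<lambda>j. a j * real j) sums (y * exp y)"
    by (rule recurrent_weights_first_moment[OF a _ rec]) simp
  have central: "(\<lambda>j. a j * (real j - y) ^ 2) sums (y * exp y)"
    using recurrent_weights_central_moment[OF a _ rec] a by (simp add: sums_iff)
  have "(\<lambda>j. a j * (real j - y) ^ 2 + 2 * y * (a j * real j) - y ^ 2 * a j) sums
      (y * exp y + 2 * y * (y * exp y) - y ^ 2 * exp y)"
    by (intro sums_add sums_diff sums_mult central first a)
  moreover have "(\<lambda>j. a j * (real j - y) ^ 2 + 2 * y * (a j * real j) - y ^ 2 * a j) =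
      (\<lambda>j. a j * real j ^ 2)"
    by (simp add: power2_eq_square algebra_simps)
  moreover have "y * exp y + 2 * y * (y * exp y) - y ^ 2 * exp y = y * (y + 1) * exp y"
    by (simp add: power2_eq_square algebra_simps)
  ultimately show ?thesis unfolding a_def by (simp only:)
qed

lemma e_mu_central_moment_le:
  assumes "\<mu> \<ge> 0" "z \<ge> 0"
  obtains V where "(\<lambda>m. z ^ m / gam \<mu> m * (node \<mu> m - z) ^ 2) sums V"
    and "V \<le> (1 + 2 * \<mu>) * z * e_mu \<mu> z"
proof -
  define b where "b m = z ^ m / gam \<mu> m" for m
  have b: "b sums e_mu \<mu> z" unfolding b_def by (rule sums_e_mu[OF assms(1)])
  have b_nonneg: "b m \<ge> 0" for m
    unfolding b_def using assms gam_pos[OF assms(1), of m] by simp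
  have rec: "b (Suc m) * node \<mu> (Suc m) = z * b m" for m
    unfolding b_def using gam_Suc[OF assms(1), of m] gam_pos[OF assms(1), of m]
      node_ge[OF assms(1), of "Suc m"] by (simp add: field_simps)
  have incr_le: "b m * (node \<mu> (Suc m) - node \<mu> m) \<le> (1 + 2 * \<mu>) * b m" for m
    using node_Suc_diff[OF assms(1), of m] b_nonneg[of m]
    by (simp add: mult.commute mult_left_mono abs_le_iff)
  have bound_summable: "summable (\<lambda>m. (1 + 2 * \<mu>) * b m)"
    using b by (intro summable_mult) (simp add: sums_iff)
  have summable: "summable (\<lambda>m. b m * (node \<mu> (Suc m) - node \<mu> m))"
  proof (rule summable_comparison_test'[OF bound_summable])
    show "norm (b m * (node \<mu> (Suc m) - node \<mu> m)) \<le> (1 + 2 * \<mu>) * b m" for m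
      using mult_left_mono[OF node_Suc_diff[OF assms(1), of m] b_nonneg[of m]]
      by (simp add: abs_mult b_nonneg mult.commute)
  qed
  have "(\<Sum>m. b m * (node \<mu> (Suc m) - node \<mu> m)) \<le> (\<Sum>m. (1 + 2 * \<mu>) * b m)"
    by (rule suminf_le[OF incr_le summable bound_summable])
  also have "\<dots> = (1 + 2 * \<mu>) * e_mu \<mu> z"
    using b by (simp add: sums_iff suminf_mult)
  finally have "z * (\<Sum>m. b m * (node \<mu> (Suc m) - node \<mu> m)) \<le> z * ((1 + 2 * \<mu>) * e_mu \<mu> z)"
    by (rule mult_left_mono[OF _ assms(2)])
  moreover have "(\<lambda>m. b m * (node \<mu> m - z) ^ 2) sums (z * (\<Sum>m. b m * (node \<mu> (Suc m) - node \<mu> m)))"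
    by (rule recurrent_weights_central_moment[OF b _ rec summable]) (simp add: node_def theta_def)
  ultimately show ?thesis using that unfolding b_def by (simp add: ac_simps)
qed

lemma node_add_even: "2 * j \<le> k \<Longrightarrow> node \<mu> (k - 2 * j) + 2 * real j = node \<mu> k"
  unfolding node_def theta_def by (auto simp: of_nat_diff)

lemma hpoly_weight_eq:
  assumes "\<mu> \<ge> 0"
  shows "hpoly \<mu> k (real n) \<alpha> / gam \<mu> k * x ^ k =
    (\<Sum>j\<le>k div 2. (\<alpha> * x\<^sup>2) ^ j / fact j * ((real n * x) ^ (k - 2 * j) / gam \<mu> (k - 2 * j)))"
proof -
  have "gam \<mu> k \<noteq> 0" using gam_pos[OF assms, of k] by simp
  then have "hpoly \<mu> k (real n) \<alpha> / gam \<mu> k * x ^ k =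
      (\<Sum>j\<le>k div 2. \<alpha> ^ j * real n ^ (k - 2 * j) / (fact j * gam \<mu> (k - 2 * j)) * x ^ k)"
    unfolding hpoly_def atMost_atLeast0 by (simp add: sum_distrib_right)
  also have "\<dots> = (\<Sum>j\<le>k div 2. (\<alpha> * x\<^sup>2) ^ j / fact j * ((real n * x) ^ (k - 2 * j) / gam \<mu> (k - 2 * j)))"
  proof (rule sum.cong[OF refl])
    fix j assume "j \<in> {..k div 2}"
    then have "2 * j \<le> k" by auto
    then have "x ^ k = (x\<^sup>2) ^ j * x ^ (k - 2 * j)"
      by (metis le_add_diff_inverse power_add power_mult)
    then show "\<alpha> ^ j * real n ^ (k - 2 * j) / (fact j * gam \<mu> (k - 2 * j)) * x ^ k =
        (\<alpha> * x\<^sup>2) ^ j / fact j * ((real n * x) ^ (k - 2 * j) / gam \<mu> (k - 2 * j))"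
      by (simp add: power_mult_distrib field_simps)
  qed
  finally show ?thesis .
qed

definition Top_weight :: "real \<Rightarrow> real \<Rightarrow> nat \<Rightarrow> real \<Rightarrow> nat \<times> nat \<Rightarrow> real" where
  "Top_weight \<alpha> \<mu> n x = (\<lambda>(j, m). (\<alpha> * x\<^sup>2) ^ j / fact j * ((real n * x) ^ m / gam \<mu> m))"

definition Top_node :: "real \<Rightarrow> nat \<Rightarrow> nat \<times> nat \<Rightarrow> real" where
  "Top_node \<mu> n = (\<lambda>(j, m). (node \<mu> m + 2 * real j) / real n)"

lemma Top_eq_has_sum:
  assumes "\<mu> \<ge> 0" and "((\<lambda>p. Top_weight \<alpha> \<mu> n x p * f (Top_node \<mu> n p)) has_sum S) UNIV"
  shows "Top \<alpha> \<mu> n f x = S / (exp (\<alpha> * x\<^sup>2) * e_mu \<mu> (real n * x))"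
proof -
  have "(\<Sum>j\<le>k div 2. Top_weight \<alpha> \<mu> n x (j, k - 2 * j) * f (Top_node \<mu> n (j, k - 2 * j))) =
      hpoly \<mu> k (real n) \<alpha> / gam \<mu> k * x ^ k * f ((real k + 2 * \<mu> * theta k) / real n)" for k
    unfolding hpoly_weight_eq[OF assms(1)] sum_distrib_right node_def[symmetric]
      Top_weight_def Top_node_def
    by (intro sum.cong refl) (simp add: node_add_even)
  then have "(\<lambda>k. hpoly \<mu> k (real n) \<alpha> / gam \<mu> k * x ^ k * f ((real k + 2 * \<mu> * theta k) / real n))
      sums S"
    using has_sum_imp_sums_grouped[OF assms(2)] by simp
  then show ?thesis unfolding Top_def by (simp add: sums_iff)
qed

lemma Top_weight_nonneg:
  "\<alpha> \<ge> 0 \<Longrightarrow> \<mu> \<ge> 0 \<Longrightarrow> x \<ge> 0 \<Longrightarrow> Top_weight \<alpha> \<mu> n x p \<ge> 0"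
  unfolding Top_weight_def using gam_pos by (auto simp: case_prod_beta intro!: divide_nonneg_pos)

lemma Top_node_nonneg: "\<mu> \<ge> 0 \<Longrightarrow> Top_node \<mu> n p \<ge> 0"
  unfolding Top_node_def node_def theta_def by (auto simp: case_prod_beta)

lemma has_sum_Top_weight:
  assumes "\<alpha> \<ge> 0" "\<mu> \<ge> 0" "x \<ge> 0"
  shows "(Top_weight \<alpha> \<mu> n x has_sum (exp (\<alpha> * x\<^sup>2) * e_mu \<mu> (real n * x))) UNIV"
  unfolding Top_weight_def using assms gam_pos[OF assms(2)]
  by (intro has_sum_product_nonneg sums_exp_weights sums_e_mu) (auto intro!: divide_nonneg_pos)

(* The cross term of (t - x)^2 has no sign; bounding it away keeps each double series
   below a sum of products of nonnegative single series. *)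
lemma Top_node_dist_sq:
  assumes "n > 0"
  shows "(Top_node \<mu> n (j, m) - x)\<^sup>2 \<le> (2 * (node \<mu> m - real n * x)\<^sup>2 + 8 * real j ^ 2) / (real n)\<^sup>2"
proof -
  have "Top_node \<mu> n (j, m) - x = ((node \<mu> m - real n * x) + 2 * real j) / real n"
    unfolding Top_node_def using assms by (simp add: field_simps)
  moreover have "((node \<mu> m - real n * x) + 2 * real j)\<^sup>2 \<le> 2 * (node \<mu> m - real n * x)\<^sup>2 + 8 * real j ^ 2"
    using sum_squares_ge_zero[of "node \<mu> m - real n * x - 2 * real j" 0]
    by (simp add: power2_eq_square algebra_simps)
  ultimately show ?thesis by (simp add: power_divide divide_right_mono)
qed

lemma has_sum_Top_weight_majorant:
  assumes "\<alpha> \<ge> 0" "\<mu> \<ge> 0" "x \<ge> 0" "n > 0"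
  obtains V where
    "((\<lambda>p. Top_weight \<alpha> \<mu> n x p *
        (case p of (j, m) \<Rightarrow> (2 * (node \<mu> m - real n * x)\<^sup>2 + 8 * real j ^ 2) / (real n)\<^sup>2)) has_sum V) UNIV"
    and "V \<le> exp (\<alpha> * x\<^sup>2) * e_mu \<mu> (real n * x) *
        (2 * (1 + 2 * \<mu>) * x + 8 * (\<alpha> * x\<^sup>2) * (\<alpha> * x\<^sup>2 + 1)) / real n"
proof -
  define y where "y = \<alpha> * x\<^sup>2"
  define z where "z = real n * x"
  define a where "a j = y ^ j / fact j" for j
  define b where "b m = z ^ m / gam \<mu> m" for m
  have y: "y \<ge> 0" and z: "z \<ge> 0" using assms unfolding y_def z_def by auto
  have a_nonneg: "a j \<ge> 0" for j unfolding a_def using y by simp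
  have b_nonneg: "b m \<ge> 0" for m unfolding b_def using z gam_pos[OF assms(2), of m] by simp
  obtain Vb where Vb: "(\<lambda>m. b m * (node \<mu> m - z)\<^sup>2) sums Vb"
    and Vb_le: "Vb \<le> (1 + 2 * \<mu>) * z * e_mu \<mu> z"
    using e_mu_central_moment_le[OF assms(2) z] unfolding b_def by blast
  have "((\<lambda>(j, m). a j * (b m * (node \<mu> m - z)\<^sup>2)) has_sum (exp y * Vb)) UNIV"
    using a_nonneg b_nonneg unfolding a_def
    by (intro has_sum_product_nonneg sums_exp_weights Vb) auto
  moreover have "((\<lambda>(j, m). (a j * real j ^ 2) * b m) has_sum (y * (y + 1) * exp y * e_mu \<mu> z)) UNIV"
    using y b_nonneg unfolding a_def b_def
    by (intro has_sum_product_nonneg sums_exp_weights_index_sq sums_e_mu assms(2)) auto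
  ultimately have "((\<lambda>p. 1 / (real n)\<^sup>2 * (2 * (case p of (j, m) \<Rightarrow> a j * (b m * (node \<mu> m - z)\<^sup>2)) +
        8 * (case p of (j, m) \<Rightarrow> (a j * real j ^ 2) * b m))) has_sum
      (1 / (real n)\<^sup>2 * (2 * (exp y * Vb) + 8 * (y * (y + 1) * exp y * e_mu \<mu> z)))) UNIV"
    by (intro has_sum_add has_sum_cmult_right)
  moreover have "1 / (real n)\<^sup>2 * (2 * (exp y * Vb) + 8 * (y * (y + 1) * exp y * e_mu \<mu> z)) \<le>
      exp y * e_mu \<mu> z * (2 * (1 + 2 * \<mu>) * x + 8 * y * (y + 1)) / real n"
  proof -
    have "exp y * Vb \<le> exp y * ((1 + 2 * \<mu>) * z * e_mu \<mu> z)"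
      by (rule mult_left_mono[OF Vb_le]) simp
    then have "2 * (exp y * Vb) \<le> exp y * e_mu \<mu> z * (2 * (1 + 2 * \<mu>) * x) * real n"
      unfolding z_def by (simp add: algebra_simps)
    moreover have "8 * (y * (y + 1) * exp y * e_mu \<mu> z) \<le> exp y * e_mu \<mu> z * (8 * y * (y + 1)) * real n"
    proof -
      have "8 * (y * (y + 1) * exp y * e_mu \<mu> z) = exp y * e_mu \<mu> z * (8 * y * (y + 1)) * 1"
        by (simp add: algebra_simps)
      also have "\<dots> \<le> exp y * e_mu \<mu> z * (8 * y * (y + 1)) * real n"
        using assms(4) y e_mu_ge_1[OF assms(2) z] by (intro mult_left_mono) auto
      finally show ?thesis .
    qed
    ultimately have "2 * (exp y * Vb) + 8 * (y * (y + 1) * exp y * e_mu \<mu> z) \<le>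
        exp y * e_mu \<mu> z * (2 * (1 + 2 * \<mu>) * x + 8 * y * (y + 1)) * real n"
      by (simp add: algebra_simps)
    then show ?thesis using assms(4) by (simp add: divide_simps power2_eq_square)
  qed
  moreover have "(\<lambda>p. Top_weight \<alpha> \<mu> n x p *
        (case p of (j, m) \<Rightarrow> (2 * (node \<mu> m - real n * x)\<^sup>2 + 8 * real j ^ 2) / (real n)\<^sup>2)) =
      (\<lambda>p. 1 / (real n)\<^sup>2 * (2 * (case p of (j, m) \<Rightarrow> a j * (b m * (node \<mu> m - z)\<^sup>2)) +
        8 * (case p of (j, m) \<Rightarrow> (a j * real j ^ 2) * b m)))"
    unfolding Top_weight_def a_def b_def y_def z_def by (auto simp: fun_eq_iff algebra_simps add_divide_distrib)
  ultimately show ?thesis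
    using that unfolding y_def z_def by auto
qed

lemma Top_deviation_bound:
  fixes g :: "real \<Rightarrow> real"
  assumes "\<alpha> \<ge> 0" "\<mu> \<ge> 0" "x \<ge> 0" "n > 0" "K \<ge> 0"
    and dev: "\<And>t. t \<ge> 0 \<Longrightarrow> \<bar>g t - g x\<bar> \<le> \<epsilon> + K * (t - x)\<^sup>2"
  shows "\<bar>Top \<alpha> \<mu> n g x - g x\<bar> \<le>
    \<epsilon> + K * (2 * (1 + 2 * \<mu>) * x + 8 * (\<alpha> * x\<^sup>2) * (\<alpha> * x\<^sup>2 + 1)) / real n"
proof -
  define E where "E = exp (\<alpha> * x\<^sup>2) * e_mu \<mu> (real n * x)"
  define C where "C = 2 * (1 + 2 * \<mu>) * x + 8 * (\<alpha> * x\<^sup>2) * (\<alpha> * x\<^sup>2 + 1)"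
  define d where "d = (\<lambda>(j, m). (2 * (node \<mu> m - real n * x)\<^sup>2 + 8 * real j ^ 2) / (real n)\<^sup>2)"
  have E_pos: "E > 0"
    unfolding E_def using e_mu_ge_1[OF assms(2), of "real n * x"] assms(3) by simp
  obtain V where V: "((\<lambda>p. Top_weight \<alpha> \<mu> n x p * d p) has_sum V) UNIV"
    and V_le: "V \<le> E * C / real n"
    unfolding d_def E_def C_def by (rule has_sum_Top_weight_majorant[OF assms(1-4)])
  have dev_d: "\<bar>g (Top_node \<mu> n p) - g x\<bar> \<le> \<epsilon> + K * d p" for p
  proof -
    obtain j m where p: "p = (j, m)" by fastforce
    have "K * (Top_node \<mu> n p - x)\<^sup>2 \<le> K * d p"
      using mult_left_mono[OF Top_node_dist_sq[OF assms(4), of \<mu> j m x] assms(5)]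
      unfolding p d_def by simp
    then show ?thesis using dev[OF Top_node_nonneg[OF assms(2), of n p]] by linarith
  qed
  obtain S where S: "((\<lambda>p. Top_weight \<alpha> \<mu> n x p * g (Top_node \<mu> n p)) has_sum S) UNIV"
    and S_le: "\<bar>S - g x * E\<bar> \<le> \<epsilon> * E + K * V"
    unfolding E_def by (rule has_sum_weighted_deviation[OF has_sum_Top_weight[OF assms(1-3)] V
        Top_weight_nonneg[OF assms(1-3)] dev_d])
  have "Top \<alpha> \<mu> n g x - g x = (S - g x * E) / E"
    using Top_eq_has_sum[OF assms(2) S] E_pos unfolding E_def[symmetric]
    by (simp add: field_simps)
  then have "\<bar>Top \<alpha> \<mu> n g x - g x\<bar> = \<bar>S - g x * E\<bar> / E"
    using E_pos by simp
  also have "\<dots> \<le> (\<epsilon> * E + K * (E * C / real n)) / E"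
  proof (rule divide_right_mono)
    show "\<bar>S - g x * E\<bar> \<le> \<epsilon> * E + K * (E * C / real n)"
      using S_le mult_left_mono[OF V_le assms(5)] by linarith
  qed (use E_pos in simp)
  also have "\<dots> = \<epsilon> + K * C / real n"
    using E_pos by (simp add: field_simps)
  finally show ?thesis unfolding C_def .
qed

theorem theorem4:
  fixes \<alpha> \<mu> :: real and g :: "real \<Rightarrow> real" and A :: "real set"
  assumes "\<alpha> \<ge> 0" and "\<mu> \<ge> 0"
    and "uniformly_continuous_on {0..} g" and "bounded (g ` {0..})"
    and "compact A" and "A \<subseteq> {0..}"
  shows "uniform_limit A (\<lambda>n x. Top \<alpha> \<mu> n g x) g sequentially"
proof (rule uniform_limitI_rate)
  fix \<epsilon> :: real assume "\<epsilon> > 0"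
  obtain K where "K \<ge> 0" and K: "\<And>t x. t \<ge> 0 \<Longrightarrow> x \<ge> 0 \<Longrightarrow> \<bar>g t - g x\<bar> \<le> \<epsilon> + K * (t - x)\<^sup>2"
    using uniformly_continuous_bounded_quadratic_modulus[OF assms(3,4) \<open>\<epsilon> > 0\<close>] by auto
  obtain R where R: "\<And>x. x \<in> A \<Longrightarrow> x \<le> R"
    using compact_imp_bounded[OF assms(5)] unfolding bounded_iff real_norm_def by (meson abs_le_D1)
  define C where "C x = 2 * (1 + 2 * \<mu>) * x + 8 * (\<alpha> * x\<^sup>2) * (\<alpha> * x\<^sup>2 + 1)" for x
  have "\<bar>Top \<alpha> \<mu> n g x - g x\<bar> \<le> \<epsilon> + K * C R / real n" if "n > 0" "x \<in> A" for n x
  proof -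
    have "0 \<le> x" "x \<le> R" using that assms(6) R by auto
    then have "\<alpha> * x\<^sup>2 \<le> \<alpha> * R\<^sup>2" using assms(1) by (intro mult_left_mono power_mono) auto
    with \<open>0 \<le> x\<close> \<open>x \<le> R\<close> have "C x \<le> C R"
      unfolding C_def using assms(1,2) by (intro add_mono mult_mono) auto
    then have "K * C x / real n \<le> K * C R / real n"
      using \<open>K \<ge> 0\<close> by (simp add: divide_right_mono mult_left_mono)
    moreover have "\<bar>Top \<alpha> \<mu> n g x - g x\<bar> \<le> \<epsilon> + K * C x / real n"
      unfolding C_def using \<open>0 \<le> x\<close> K[OF _ \<open>0 \<le> x\<close>]
      by (intro Top_deviation_bound assms(1,2) \<open>n > 0\<close> \<open>K \<ge> 0\<close>)
    ultimately show ?thesis by linarith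
  qed
  then show "\<exists>C. \<forall>n>0. \<forall>x\<in>A. dist (Top \<alpha> \<mu> n g x) (g x) \<le> \<epsilon> + C / real n"
    by (auto simp: dist_real_def)
qed

end
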